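(* Let $(H_1,+_1,\circ_1)$ and $(H_2,+_2,\circ_2)$ be commutative multiplicative hyperrings with identities $1_{H_1},1_{H_2}$, and let $P_1$ and $P_2$ be nonzero proper strong $\mathcal{C}$-hyperideals of $H_1$ and $H_2$, respectively. Then $P_1\times P_2$ is an sdf-absorbing hyperideal of $H_1\times H_2$ if and only if $P_1$ and $P_2$ are sdf-absorbing hyperideals of $H_1$ and $H_2$, respectively, and $1_{H_1}+1_{H_1}\in P_1$ or $1_{H_2}+1_{H_2}\in P_2$.
   Context: A commutative multiplicative hyperring $(H,+,\circ)$ consists of an abelian group $(H,+)$ and an associative, commutative hyperoperation $\circ: H\times H\to P^*(H)$ with $x\circ(y+z)\subseteq x\circ y+x\circ z$ and $x\circ(-y)=-(x\circ y)=(-x)\circ y$. For subsets $A,B$, $A\circ B=\bigcup_{a\in A,b\in B}a\circ b$, $A\pm B=\{a\pm b\}$; $x^2=x\circ x$. Identity: $x\in x\circ 1$ for all $x$. $H_1\times H_2$ is the hyperring with $(x_1,x_2)+(y_1,y_2)=(x_1+_1y_1,x_2+_2y_2)$ and $(x_1,x_2)\circ(y_1,y_2)=\{(a,b): a\in x_1\circ_1y_1, b\in x_2\circ_2y_2\}$. A hyperideal is a nonempty $P$ with $x-y\in P$ and $r\circ x\subseteq P$ for $x,y\in P$, $r\in H$. Let $\mathcal{C}=\{c_1\circ\cdots\circ c_n: c_i\in H\}$ and $\mathfrak{C}=\{\sum_{i=1}^m C_i: C_i\in\mathcal{C}\}$; $P$ is a strong $\mathcal{C}$-hyperideal if for every $D\in\mathfrak{C}$,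 $D\cap P\neq\varnothing$ implies $D\subseteq P$. A proper hyperideal $P$ is sdf-absorbing if whenever $x,y$ are nonzero and $x^2-y^2\subseteq P$, then $x-y\in P$ or $x+y\in P$. *)

theory Defs
  imports Main "HOL-Library.Product_Plus"
begin

text \<open>A commutative multiplicative hyperring on a type 'a: the additive abelian group
  is the type-class structure of 'a (class ab_group_add), the hyperoperation is
  m :: 'a => 'a => 'a set (values in the nonempty subsets of 'a).\<close>

definition hset_mult :: "('a \<Rightarrow> 'a \<Rightarrow> 'a set) \<Rightarrow> 'a set \<Rightarrow> 'a set \<Rightarrow> 'a set" where
  "hset_mult m A B = (\<Union>a\<in>A. \<Union>b\<in>B. m a b)"

definition hset_plus :: "'a::plus set \<Rightarrow> 'a set \<Rightarrow> 'a set" where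
  "hset_plus A B = {a + b | a b. a \<in> A \<and> b \<in> B}"

definition hset_minus :: "'a::minus set \<Rightarrow> 'a set \<Rightarrow> 'a set" where
  "hset_minus A B = {a - b | a b. a \<in> A \<and> b \<in> B}"

definition comm_mult_hyperring :: "('a::ab_group_add \<Rightarrow> 'a \<Rightarrow> 'a set) \<Rightarrow> bool" where
  "comm_mult_hyperring m \<longleftrightarrow>
     (\<forall>x y. m x y \<noteq> {}) \<and>
     (\<forall>x y z. hset_mult m (m x y) {z} = hset_mult m {x} (m y z)) \<and>
     (\<forall>x y. m x y = m y x) \<and>
     (\<forall>x y z. m x (y + z) \<subseteq> hset_plus (m x y) (m x z)) \<and>
     (\<forall>x y. m x (- y) = uminus ` (m x y) \<and> m (- x) y = uminus ` (m x y))"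

definition hyperring_identity :: "('a \<Rightarrow> 'a \<Rightarrow> 'a set) \<Rightarrow> 'a \<Rightarrow> bool" where
  "hyperring_identity m e \<longleftrightarrow> (\<forall>x. x \<in> m x e)"

text \<open>Product hyperring H1 x H2 (addition is componentwise via Product_Plus).\<close>
definition prod_hmult :: "('a \<Rightarrow> 'a \<Rightarrow> 'a set) \<Rightarrow> ('b \<Rightarrow> 'b \<Rightarrow> 'b set)
    \<Rightarrow> ('a \<times> 'b) \<Rightarrow> ('a \<times> 'b) \<Rightarrow> ('a \<times> 'b) set" where
  "prod_hmult m1 m2 x y = m1 (fst x) (fst y) \<times> m2 (snd x) (snd y)"

definition hyperideal :: "('a::ab_group_add \<Rightarrow> 'a \<Rightarrow> 'a set) \<Rightarrow> 'a set \<Rightarrow> bool" where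
  "hyperideal m P \<longleftrightarrow> P \<noteq> {} \<and> (\<forall>x\<in>P. \<forall>y\<in>P. x - y \<in> P) \<and> (\<forall>r. \<forall>x\<in>P. m r x \<subseteq> P)"

fun hprod_list :: "('a \<Rightarrow> 'a \<Rightarrow> 'a set) \<Rightarrow> 'a list \<Rightarrow> 'a set" where
  "hprod_list m [] = {}"
| "hprod_list m (c # cs) = foldl (\<lambda>A d. hset_mult m A {d}) {c} cs"

definition classC :: "('a \<Rightarrow> 'a \<Rightarrow> 'a set) \<Rightarrow> 'a set set" where
  "classC m = {hprod_list m cs | cs. cs \<noteq> []}"

fun hsum_list :: "'a::monoid_add set list \<Rightarrow> 'a set" where
  "hsum_list [] = {0}"
| "hsum_list (C # Cs) = hset_plus C (hsum_list Cs)"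

definition frakC :: "('a::monoid_add \<Rightarrow> 'a \<Rightarrow> 'a set) \<Rightarrow> 'a set set" where
  "frakC m = {hsum_list Cs | Cs. Cs \<noteq> [] \<and> set Cs \<subseteq> classC m}"

definition strong_C_hyperideal :: "('a::ab_group_add \<Rightarrow> 'a \<Rightarrow> 'a set) \<Rightarrow> 'a set \<Rightarrow> bool" where
  "strong_C_hyperideal m P \<longleftrightarrow> hyperideal m P \<and>
     (\<forall>D\<in>frakC m. D \<inter> P \<noteq> {} \<longrightarrow> D \<subseteq> P)"

definition sdf_absorbing :: "('a::ab_group_add \<Rightarrow> 'a \<Rightarrow> 'a set) \<Rightarrow> 'a set \<Rightarrow> bool" where
  "sdf_absorbing m P \<longleftrightarrow> hyperideal m P \<and> P \<noteq> UNIV \<and>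
     (\<forall>x y. x \<noteq> 0 \<longrightarrow> y \<noteq> 0 \<longrightarrow> hset_minus (m x x) (m y y) \<subseteq> P \<longrightarrow>
        x - y \<in> P \<or> x + y \<in> P)"

end

theory Submission
  imports Defs
begin

text \<open>Squares in H1 \<times> H2 are computed componentwise, so the sdf condition for P1 \<times> P2
  splits into the two component conditions, except that both components must pick the
  same sign. A strong C-hyperideal containing 1 + 1 contains r + r for every r, because
  r \<in> r \<circ> 1 and r \<circ> (1 + 1) \<subseteq> r \<circ> 1 + r \<circ> 1; in such a component x - y \<in> P iff
  x + y \<in> P, so it accepts either sign. Conversely, in a strong C-hyperideal
  x \<circ> x - x \<circ> x \<subseteq> P, so testing (1, 1) against (1, -1) forces 1 + 1 into one component.
  Since P \<noteq> {0}, comparing with a nonzero element of P shows that y \<circ> y \<subseteq> P forces y \<in> P;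
  hence the component conditions also hold when one argument is 0, as needed for pairs
  such as (x, 0).\<close>

lemma hyperideal_zero: "hyperideal m P \<Longrightarrow> 0 \<in> P"
  unfolding hyperideal_def by (metis all_not_in_conv diff_self)

lemma hyperideal_diff: "hyperideal m P \<Longrightarrow> a \<in> P \<Longrightarrow> b \<in> P \<Longrightarrow> a - b \<in> P"
  unfolding hyperideal_def by blast

lemma hyperideal_uminus: "hyperideal m P \<Longrightarrow> a \<in> P \<Longrightarrow> - a \<in> P"
  using hyperideal_diff[of m P 0 a] hyperideal_zero[of m P] by simp

lemma hyperideal_add: "hyperideal m P \<Longrightarrow> a \<in> P \<Longrightarrow> b \<in> P \<Longrightarrow> a + b \<in> P"
  using hyperideal_diff[of m P a "- b"] hyperideal_uminus[of m P b] by simp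

lemma hyperideal_mult_subset: "hyperideal m P \<Longrightarrow> x \<in> P \<Longrightarrow> m r x \<subseteq> P"
  unfolding hyperideal_def by blast

lemma hyperideal_diff_mem_iff_add_mem:
  assumes "hyperideal m P" and "\<And>r. r + r \<in> P"
  shows "x - y \<in> P \<longleftrightarrow> x + y \<in> P"
proof -
  have "x + y = (x - y) + (y + y)" and "x - y = (x + y) - (y + y)"
    by (simp_all add: algebra_simps)
  then show ?thesis
    using assms hyperideal_add[OF assms(1)] hyperideal_diff[OF assms(1)] by metis
qed

lemma hyperideal_Times:
  assumes "hyperideal m1 P1" and "hyperideal m2 P2"
  shows "hyperideal (prod_hmult m1 m2) (P1 \<times> P2)"
  unfolding hyperideal_def prod_hmult_def
  using hyperideal_zero[OF assms(1)] hyperideal_zero[OF assms(2)]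
    hyperideal_diff[OF assms(1)] hyperideal_diff[OF assms(2)]
    hyperideal_mult_subset[OF assms(1)] hyperideal_mult_subset[OF assms(2)]
  by (auto simp: mem_Times_iff) blast+

lemma comm_mult_hyperring_nonempty: "comm_mult_hyperring m \<Longrightarrow> m x y \<noteq> {}"
  by (simp add: comm_mult_hyperring_def)

lemma comm_mult_hyperring_uminus_left:
  "comm_mult_hyperring m \<Longrightarrow> m (- x) y = uminus ` m x y"
  by (simp add: comm_mult_hyperring_def)

lemma comm_mult_hyperring_uminus_right:
  "comm_mult_hyperring m \<Longrightarrow> m x (- y) = uminus ` m x y"
  by (simp add: comm_mult_hyperring_def)

lemma comm_mult_hyperring_uminus_uminus:
  "comm_mult_hyperring m \<Longrightarrow> m (- x) (- y) = m x y"
  using comm_mult_hyperring_uminus_left[of m x "- y"] comm_mult_hyperring_uminus_right[of m x y]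
  by (simp add: image_image)

lemma comm_mult_hyperring_distrib:
  "comm_mult_hyperring m \<Longrightarrow> m x (y + z) \<subseteq> hset_plus (m x y) (m x z)"
  by (simp add: comm_mult_hyperring_def)

lemma hyperring_identity_nonzero:
  assumes "hyperring_identity m e" and "hyperideal m P" and "P \<noteq> UNIV"
  shows "e \<noteq> 0"
proof
  assume "e = 0"
  then have "x \<in> P" for x
    using assms(1) hyperideal_mult_subset[OF assms(2) hyperideal_zero[OF assms(2)]]
    unfolding hyperring_identity_def by blast
  then show False using assms(3) by blast
qed

lemma hset_minus_empty_iff: "hset_minus A B = {} \<longleftrightarrow> A = {} \<or> B = {}"
  unfolding hset_minus_def by blast

lemma hset_minus_subset_hyperideal:
  "hyperideal m P \<Longrightarrow> A \<subseteq> P \<Longrightarrow> B \<subseteq> P \<Longrightarrow> hset_minus A B \<subseteq> P"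
  unfolding hset_minus_def using hyperideal_diff by blast

lemma hset_minus_subset_hyperideal_iff:
  assumes "hyperideal m P" and "A \<noteq> {}" and "B \<noteq> {}" and "hset_minus A B \<subseteq> P"
  shows "A \<subseteq> P \<longleftrightarrow> B \<subseteq> P"
proof
  assume B: "B \<subseteq> P"
  obtain b where "b \<in> B" using assms(3) by blast
  then have "a - b \<in> P" and "b \<in> P" if "a \<in> A" for a
    using that assms(4) B unfolding hset_minus_def by blast+
  then show "A \<subseteq> P" using hyperideal_add[OF assms(1), of "a - b" b for a] by fastforce
next
  assume A: "A \<subseteq> P"
  obtain a where "a \<in> A" using assms(2) by blast
  then have "a - b \<in> P" and "a \<in> P" if "b \<in> B" for b
    using that assms(4) A unfolding hset_minus_def by blast+
  then show "B \<subseteq> P" using hyperideal_diff[OF assms(1), of a "a - b" for b] by fastforce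
qed

lemma hset_minus_prod_hmult:
  "hset_minus (prod_hmult m1 m2 x x) (prod_hmult m1 m2 y y) =
    hset_minus (m1 (fst x) (fst x)) (m1 (fst y) (fst y)) \<times>
    hset_minus (m2 (snd x) (snd x)) (m2 (snd y) (snd y))"
  unfolding hset_minus_def prod_hmult_def by (auto simp: prod_eq_iff) (metis fst_conv snd_conv)+

lemma hset_plus_mult_in_frakC: "hset_plus (m a b) (m c d) \<in> frakC m"
proof -
  have "hprod_list m [x, y] = m x y" for x y by (simp add: hset_mult_def)
  then have "m x y \<in> classC m" for x y
    unfolding classC_def by (metis (mono_tags, lifting) list.distinct(1) mem_Collect_eq)
  moreover have "hsum_list [m a b, m c d] = hset_plus (m a b) (m c d)"
    by (auto simp: hset_plus_def)
  ultimately show ?thesis unfolding frakC_def by fastforce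
qed

lemma strong_C_hyperideal_hset_plus_subset:
  assumes "strong_C_hyperideal m P" and "w \<in> P" and "w \<in> hset_plus (m a b) (m c d)"
  shows "hset_plus (m a b) (m c d) \<subseteq> P"
  using assms hset_plus_mult_in_frakC[of m a b c d] unfolding strong_C_hyperideal_def by blast

lemma strong_C_hyperideal_double:
  assumes "comm_mult_hyperring m" and "hyperring_identity m e"
    and "strong_C_hyperideal m P" and "e + e \<in> P"
  shows "r + r \<in> P"
proof -
  have hi: "hyperideal m P" using assms(3) unfolding strong_C_hyperideal_def by blast
  obtain w where w: "w \<in> m r (e + e)" using comm_mult_hyperring_nonempty[OF assms(1)] by blast
  have "w \<in> P" using w hyperideal_mult_subset[OF hi assms(4)] by blast
  moreover have "w \<in> hset_plus (m r e) (m r e)"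
    using w comm_mult_hyperring_distrib[OF assms(1)] by blast
  moreover have "r \<in> m r e" using assms(2) unfolding hyperring_identity_def by blast
  ultimately show ?thesis
    using strong_C_hyperideal_hset_plus_subset[OF assms(3)] unfolding hset_plus_def by blast
qed

lemma strong_C_hyperideal_hset_minus_self:
  assumes "comm_mult_hyperring m" and "strong_C_hyperideal m P"
  shows "hset_minus (m x y) (m x y) \<subseteq> P"
proof
  fix z assume "z \<in> hset_minus (m x y) (m x y)"
  then obtain u v where uv: "u \<in> m x y" "v \<in> m x y" "z = u + - v"
    unfolding hset_minus_def by auto
  have neg: "- u \<in> m (- x) y" "- v \<in> m (- x) y"
    using uv comm_mult_hyperring_uminus_left[OF assms(1)] by auto
  \<comment> \<open>0 = u + (- u) lies in both P and x \<circ> y + (-x) \<circ> y, so the whole sum lies in P.\<close>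
  have "0 \<in> hset_plus (m x y) (m (- x) y)"
    using uv(1) neg(1) unfolding hset_plus_def by force
  moreover have "0 \<in> P"
    using assms(2) hyperideal_zero unfolding strong_C_hyperideal_def by blast
  ultimately have "hset_plus (m x y) (m (- x) y) \<subseteq> P"
    using strong_C_hyperideal_hset_plus_subset[OF assms(2)] by blast
  then show "z \<in> P" using uv neg(2) unfolding hset_plus_def by blast
qed

lemma sdf_absorbing_square_subset_imp_mem:
  assumes "sdf_absorbing m P" and "P \<noteq> {0}" and "m y y \<subseteq> P"
  shows "y \<in> P"
proof (cases "y = 0")
  case True
  then show ?thesis using assms(1) hyperideal_zero unfolding sdf_absorbing_def by blast
next
  case False
  have hi: "hyperideal m P" using assms(1) unfolding sdf_absorbing_def by blast
  obtain a where a: "a \<in> P" "a \<noteq> 0" using assms(2) hyperideal_zero[OF hi] by blast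
  have "hset_minus (m y y) (m a a) \<subseteq> P"
    using hset_minus_subset_hyperideal[OF hi assms(3) hyperideal_mult_subset[OF hi a(1)]] .
  then have "y - a \<in> P \<or> y + a \<in> P"
    using assms(1) False a(2) unfolding sdf_absorbing_def by blast
  then show ?thesis
    using hyperideal_add[OF hi _ a(1), of "y - a"] hyperideal_diff[OF hi _ a(1), of "y + a"] by auto
qed

lemma sdf_absorbing_absorbs:
  assumes "comm_mult_hyperring m" and "sdf_absorbing m P" and "P \<noteq> {0}"
    and sq: "hset_minus (m x x) (m y y) \<subseteq> P"
  shows "x - y \<in> P \<or> x + y \<in> P"
proof -
  have hi: "hyperideal m P" using assms(2) unfolding sdf_absorbing_def by blast
  have zero_sq: "m 0 0 \<subseteq> P" using hyperideal_mult_subset[OF hi hyperideal_zero[OF hi]] .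
  have iff: "m x x \<subseteq> P \<longleftrightarrow> m y y \<subseteq> P"
    using hset_minus_subset_hyperideal_iff[OF hi _ _ sq] comm_mult_hyperring_nonempty[OF assms(1)]
    by blast
  consider "x = 0" | "y = 0" | "x \<noteq> 0" "y \<noteq> 0" by blast
  then show ?thesis
  proof cases
    case 1
    then have "y \<in> P"
      using iff zero_sq sdf_absorbing_square_subset_imp_mem[OF assms(2,3)] by simp
    then show ?thesis using 1 hyperideal_uminus[OF hi] by simp
  next
    case 2
    then have "x \<in> P"
      using iff zero_sq sdf_absorbing_square_subset_imp_mem[OF assms(2,3)] by simp
    then show ?thesis using 2 by simp
  next
    case 3
    then show ?thesis using assms(2) sq unfolding sdf_absorbing_def by blast
  qed
qed

lemma sdf_absorbing_TimesD:
  assumes "hyperideal m1 P1" and "hyperideal m2 P2" and "P1 \<noteq> UNIV" and "P2 \<noteq> UNIV"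
    and sdf: "sdf_absorbing (prod_hmult m1 m2) (P1 \<times> P2)"
  shows "sdf_absorbing m1 P1" and "sdf_absorbing m2 P2"
proof -
  have zero_sq: "hset_minus (m1 0 0) (m1 0 0) \<subseteq> P1" "hset_minus (m2 0 0) (m2 0 0) \<subseteq> P2"
    using hset_minus_subset_hyperideal hyperideal_mult_subset hyperideal_zero assms(1,2) by metis+
  have "x - y \<in> P1 \<times> P2 \<or> x + y \<in> P1 \<times> P2"
    if "x \<noteq> 0" "y \<noteq> 0"
      and "hset_minus (m1 (fst x) (fst x)) (m1 (fst y) (fst y)) \<times>
           hset_minus (m2 (snd x) (snd x)) (m2 (snd y) (snd y)) \<subseteq> P1 \<times> P2" for x y
    using that sdf unfolding sdf_absorbing_def hset_minus_prod_hmult by blast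
  note sdf_Times = this
  have "x - y \<in> P1 \<or> x + y \<in> P1"
    if "x \<noteq> 0" "y \<noteq> 0" "hset_minus (m1 x x) (m1 y y) \<subseteq> P1" for x y
    using that zero_sq sdf_Times[of "(x, 0)" "(y, 0)"] by (auto simp: zero_prod_def)
  then show "sdf_absorbing m1 P1"
    using assms(1,3) unfolding sdf_absorbing_def by blast
  have "x - y \<in> P2 \<or> x + y \<in> P2"
    if "x \<noteq> 0" "y \<noteq> 0" "hset_minus (m2 x x) (m2 y y) \<subseteq> P2" for x y
    using that zero_sq sdf_Times[of "(0, x)" "(0, y)"] by (auto simp: zero_prod_def)
  then show "sdf_absorbing m2 P2"
    using assms(2,4) unfolding sdf_absorbing_def by blast
qed

lemma sdf_absorbing_Times_double:
  assumes "comm_mult_hyperring m1" and "comm_mult_hyperring m2"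
    and "hyperring_identity m1 e1" and "strong_C_hyperideal m1 P1" and "P1 \<noteq> UNIV"
    and "strong_C_hyperideal m2 P2"
    and sdf: "sdf_absorbing (prod_hmult m1 m2) (P1 \<times> P2)"
  shows "e1 + e1 \<in> P1 \<or> e2 + e2 \<in> P2"
proof -
  have "e1 \<noteq> 0"
    using hyperring_identity_nonzero assms(3-5) unfolding strong_C_hyperideal_def by blast
  then have nz: "(e1, e2) \<noteq> 0" "(e1, - e2) \<noteq> 0" by (simp_all add: zero_prod_def)
  have "hset_minus (prod_hmult m1 m2 (e1, e2) (e1, e2))
          (prod_hmult m1 m2 (e1, - e2) (e1, - e2)) \<subseteq> P1 \<times> P2"
    using strong_C_hyperideal_hset_minus_self[OF assms(1,4)]
      strong_C_hyperideal_hset_minus_self[OF assms(2,6)]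
      comm_mult_hyperring_uminus_uminus[OF assms(2)]
    by (simp add: hset_minus_prod_hmult) blast
  then have "(e1, e2) - (e1, - e2) \<in> P1 \<times> P2 \<or> (e1, e2) + (e1, - e2) \<in> P1 \<times> P2"
    using sdf nz unfolding sdf_absorbing_def by blast
  then show ?thesis by auto
qed

lemma sdf_absorbing_TimesI:
  assumes "comm_mult_hyperring m1" and "comm_mult_hyperring m2"
    and sdf1: "sdf_absorbing m1 P1" and "P1 \<noteq> {0}"
    and sdf2: "sdf_absorbing m2 P2" and "P2 \<noteq> {0}"
    and double: "(\<forall>r. r + r \<in> P1) \<or> (\<forall>r. r + r \<in> P2)"
  shows "sdf_absorbing (prod_hmult m1 m2) (P1 \<times> P2)"
proof -
  have hi1: "hyperideal m1 P1" and hi2: "hyperideal m2 P2" and "P1 \<noteq> UNIV"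
    using sdf1 sdf2 unfolding sdf_absorbing_def by blast+
  have "x - y \<in> P1 \<times> P2 \<or> x + y \<in> P1 \<times> P2"
    if sq: "hset_minus (prod_hmult m1 m2 x x) (prod_hmult m1 m2 y y) \<subseteq> P1 \<times> P2" for x y
  proof -
    have "hset_minus (m1 (fst x) (fst x)) (m1 (fst y) (fst y)) \<subseteq> P1"
      and "hset_minus (m2 (snd x) (snd x)) (m2 (snd y) (snd y)) \<subseteq> P2"
      using sq comm_mult_hyperring_nonempty[OF assms(1)] comm_mult_hyperring_nonempty[OF assms(2)]
      by (auto simp: hset_minus_prod_hmult times_subset_iff hset_minus_empty_iff)
    then have c1: "fst x - fst y \<in> P1 \<or> fst x + fst y \<in> P1"
      and c2: "snd x - snd y \<in> P2 \<or> snd x + snd y \<in> P2"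
      using sdf_absorbing_absorbs assms(1-6) by blast+
    show ?thesis
      using double c1 c2 hyperideal_diff_mem_iff_add_mem[OF hi1] hyperideal_diff_mem_iff_add_mem[OF hi2]
      by (auto simp: mem_Times_iff)
  qed
  then show ?thesis
    using hyperideal_Times[OF hi1 hi2] \<open>P1 \<noteq> UNIV\<close> unfolding sdf_absorbing_def by blast
qed

theorem mainTheorem14:
  fixes m1 :: "'a::ab_group_add \<Rightarrow> 'a \<Rightarrow> 'a set"
    and m2 :: "'b::ab_group_add \<Rightarrow> 'b \<Rightarrow> 'b set"
    and e1 :: 'a and e2 :: 'b and P1 :: "'a set" and P2 :: "'b set"
  assumes "comm_mult_hyperring m1" and "comm_mult_hyperring m2"
    and "hyperring_identity m1 e1" and "hyperring_identity m2 e2"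
    and "strong_C_hyperideal m1 P1" and "P1 \<noteq> {0}" and "P1 \<noteq> UNIV"
    and "strong_C_hyperideal m2 P2" and "P2 \<noteq> {0}" and "P2 \<noteq> UNIV"
  shows "sdf_absorbing (prod_hmult m1 m2) (P1 \<times> P2) \<longleftrightarrow>
         (sdf_absorbing m1 P1 \<and> sdf_absorbing m2 P2 \<and> (e1 + e1 \<in> P1 \<or> e2 + e2 \<in> P2))"
proof
  have hi1: "hyperideal m1 P1" and hi2: "hyperideal m2 P2"
    using assms(5,8) unfolding strong_C_hyperideal_def by blast+
  assume "sdf_absorbing (prod_hmult m1 m2) (P1 \<times> P2)"
  then show "sdf_absorbing m1 P1 \<and> sdf_absorbing m2 P2 \<and> (e1 + e1 \<in> P1 \<or> e2 + e2 \<in> P2)"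
    using sdf_absorbing_TimesD[OF hi1 hi2 assms(7,10)]
      sdf_absorbing_Times_double[OF assms(1-3,5,7,8)] by blast
next
  assume R: "sdf_absorbing m1 P1 \<and> sdf_absorbing m2 P2 \<and> (e1 + e1 \<in> P1 \<or> e2 + e2 \<in> P2)"
  then have "(\<forall>r. r + r \<in> P1) \<or> (\<forall>r. r + r \<in> P2)"
    using strong_C_hyperideal_double[OF assms(1,3,5)] strong_C_hyperideal_double[OF assms(2,4,8)]
    by blast
  then show "sdf_absorbing (prod_hmult m1 m2) (P1 \<times> P2)"
    using sdf_absorbing_TimesI[OF assms(1,2) _ assms(6) _ assms(9)] R by blast
qed

end
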